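(* $\mathcal{A}_h^{2h}$ is the operator adjoint of $\mathcal{I}_{2h}^{h}$ and is proportional to the left inverse of $\mathcal{I}_{2h}^{h}$: for any $\bm v_h\in\mathbb{R}^{|S_h|}$ and $\bm v_{2h}\in\mathbb{R}^{|S_{2h}|}$, \[ \big(\bm v_h, \mathcal{I}_{2h}^{h}\bm v_{2h}\big)=\big(\mathcal{A}_h^{2h}\bm v_h, \bm v_{2h}\big),\qquad \mathcal{A}_h^{2h}\mathcal{I}_{2h}^{h}\bm v_{2h}=2^d\,\bm v_{2h}, \] where the parentheses denote standard inner products. Furthermore, the stochastic matrices at consecutive levels satisfy \[ P_{2h}=\mathcal{A}_h^{2h}\,P_h\,\mathcal{I}_{2h}^{h}. \]
   Context: Partition $\mathcal{D}=[-1,1]^d$ with uniform spacing $h=1/N$ into bins $\mathcal{D}_{\bm j}(h)=\bigotimes_{k=1}^d[j_kh,(j_k+1)h)$, $\bm j\in N(h)=\{\bm j:-N\le j_k<N\ \forall k\}$, giving a finite state space $S_h$ with $|S_h|=(2/h)^d$; each bin of level $2h$ is the union of $2^d$ bins of level $h$. For a transition density $K(x,y)$ on $\mathbb{R}^d$, the Ulam–Galerkin matrix at level $h$ is $P_h(\bm i,\bm j)=\int_{\mathcal{D}_{\bm i}(h)}\int_{\mathcal{D}_{\bm j}(h)}K(x,y)\,dy\,dx$. The averaging operator $\mathcal{A}_h^{2h}$ maps a vector on level $h$ to level $2h$ by summing the entries of the $2^d$ fine bins contained in each coarse bin; the interpolation operator $\mathcal{I}_{2h}^{h}$ maps a vector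 on level $2h$ to level $h$ by assigning each fine bin the value of the coarse bin containing it. *)

theory Defs
  imports "HOL-Analysis.Analysis"
begin

text \<open>Level with N bins per unit length, i.e. spacing h = 1/N, on D = [-1,1]^d.
  The dimension d is CARD('d); multi-indices are elements of int^'d.\<close>

definition idx_set :: "nat \<Rightarrow> (int^'d::finite) set" where
  "idx_set N = {j. \<forall>k. - int N \<le> j$k \<and> j$k < int N}"

definition bin :: "nat \<Rightarrow> int^'d::finite \<Rightarrow> (real^'d) set" where
  "bin N j = {x. \<forall>k. real_of_int (j$k) * (1 / real N) \<le> x$k
                    \<and> x$k < real_of_int (j$k + 1) * (1 / real N)}"

definition ulam :: "(real^'d \<Rightarrow> real^'d \<Rightarrow> real) \<Rightarrow> nat \<Rightarrow> int^'d::finite \<Rightarrow> int^'d \<Rightarrow> real" where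
  "ulam K N i j = (LINT x:bin N i|lborel. (LINT y:bin N j|lborel. K x y))"

definition transition_density :: "(real^'d::finite \<Rightarrow> real^'d \<Rightarrow> real) \<Rightarrow> bool" where
  "transition_density K \<longleftrightarrow>
     case_prod K \<in> borel_measurable (lborel \<Otimes>\<^sub>M lborel) \<and>
     (\<forall>x y. 0 \<le> K x y) \<and>
     (\<forall>x. integrable lborel (K x) \<and> (LINT y|lborel. K x y) = 1)"

text \<open>Fine level: N = 2M bins per unit (spacing h); coarse level: M (spacing 2h).\<close>
definition avg :: "nat \<Rightarrow> (int^'d::finite \<Rightarrow> real) \<Rightarrow> int^'d \<Rightarrow> real" where
  "avg M v J = (\<Sum>j\<in>{j\<in>idx_set (2*M). bin (2*M) j \<subseteq> bin M J}. v j)"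

definition interp :: "nat \<Rightarrow> (int^'d::finite \<Rightarrow> real) \<Rightarrow> int^'d \<Rightarrow> real" where
  "interp M w j = (\<Sum>J\<in>{J\<in>idx_set M. bin (2*M) j \<subseteq> bin M J}. w J)"

definition avg_mat :: "nat \<Rightarrow> int^'d::finite \<Rightarrow> int^'d \<Rightarrow> real" where
  "avg_mat M J i = (if bin (2*M) i \<subseteq> bin M J then 1 else 0)"

definition interp_mat :: "nat \<Rightarrow> int^'d::finite \<Rightarrow> int^'d \<Rightarrow> real" where
  "interp_mat M i J = (if bin (2*M) i \<subseteq> bin M J then 1 else 0)"

definition inner_on :: "'a set \<Rightarrow> ('a \<Rightarrow> real) \<Rightarrow> ('a \<Rightarrow> real) \<Rightarrow> real" where
  "inner_on S v w = (\<Sum>j\<in>S. v j * w j)"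

end

theory Submission
  imports Defs
begin

text \<open>A fine bin i (spacing h) lies in the coarse bin J (spacing 2h) exactly when
  i_k div 2 = J_k for every k.  Hence each coarse bin is the disjoint union of the 2^d fine
  bins indexed by its children, and each fine bin lies in exactly one coarse bin.  So the
  matrices of averaging and interpolation are transposes of each other, averaging an
  interpolated vector adds up 2^d copies of each entry, and by additivity of the integral in
  both variables the coarse entry P_2h(I, J) is the sum of the fine entries P_h(i, j) over
  the children i of I and j of J.\<close>

lemma mem_bin_iff_floor:
  assumes "N > 0"
  shows "x \<in> bin N j \<longleftrightarrow> (\<forall>k. \<lfloor>x$k * real N\<rfloor> = j$k)"
  using assms by (simp add: bin_def floor_eq_iff field_simps)

lemma disjoint_family_bin: "disjoint_family (bin N)"
proof (cases "N = 0")
  case True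
  \<comment> \<open>all bins are empty, since 1 / 0 = 0\<close>
  then show ?thesis by (simp add: disjoint_family_on_def bin_def)
next
  case False
  then show ?thesis
    by (auto simp: disjoint_family_on_def mem_bin_iff_floor vec_eq_iff)
qed

lemma sets_bin [measurable]: "bin N j \<in> sets lborel"
  unfolding bin_def by measurable

lemma emeasure_bin_finite: "emeasure lborel (bin N j) < \<infinity>"
proof -
  have "bin N j \<subseteq> cbox (\<chi> k. real_of_int (j$k) * (1 / real N))
                         (\<chi> k. real_of_int (j$k + 1) * (1 / real N))"
    by (auto simp: bin_def mem_box_cart less_imp_le)
  then have "bounded (bin N j)"
    using bounded_cbox bounded_subset by blast
  then show ?thesis
    by (rule emeasure_bounded_finite)
qed

lemma finite_idx_set: "finite (idx_set N :: (int^'d::finite) set)"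
proof -
  have "vec_nth ` (idx_set N :: (int^'d) set) \<subseteq> PiE UNIV (\<lambda>_. {- int N..<int N})"
    by (auto simp: idx_set_def PiE_def extensional_def)
  then have "finite (vec_nth ` (idx_set N :: (int^'d) set))"
    by (rule finite_subset) (intro finite_PiE, auto)
  then show ?thesis
    by (rule finite_imageD) (simp add: inj_on_def vec_eq_iff)
qed

definition children :: "int^'d::finite \<Rightarrow> (int^'d) set" where
  "children J = {i. \<forall>k. i$k div 2 = J$k}"

lemma floor_mult_double_div_2: "\<lfloor>y * (2 * real M)\<rfloor> div 2 = \<lfloor>y * real M\<rfloor>"
  using floor_divide_real_eq_div[of 2 "y * (2 * real M)"] by simp

lemma bin_double_subset_iff:
  assumes "M > 0"
  shows "bin (2*M) i \<subseteq> bin M J \<longleftrightarrow> i \<in> children J"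
proof
  assume sub: "bin (2*M) i \<subseteq> bin M J"
  define x :: "real^_" where "x = (\<chi> k. real_of_int (i$k) / real (2*M))"
  have "x \<in> bin (2*M) i"
    using assms by (simp add: mem_bin_iff_floor x_def)
  with sub have "x \<in> bin M J"
    by blast
  then have "\<lfloor>x$k * real M\<rfloor> = J$k" for k
    using assms by (simp add: mem_bin_iff_floor)
  moreover have "x$k * real M = real_of_int (i$k) / 2" for k
    using assms by (simp add: x_def)
  ultimately have "\<lfloor>real_of_int (i$k) / 2\<rfloor> = J$k" for k
    by simp
  then show "i \<in> children J"
    by (simp add: children_def) (metis floor_divide_of_int_eq of_int_numeral)
next
  assume child: "i \<in> children J"
  show "bin (2*M) i \<subseteq> bin M J"
  proof
    fix x assume "x \<in> bin (2*M) i"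
    then have fine: "\<lfloor>x$k * (2 * real M)\<rfloor> = i$k" for k
      using assms by (simp add: mem_bin_iff_floor)
    have "\<lfloor>x$k * real M\<rfloor> = J$k" for k
      using floor_mult_double_div_2[of "x$k" M] fine[of k] child by (simp add: children_def)
    then show "x \<in> bin M J"
      using assms by (simp add: mem_bin_iff_floor)
  qed
qed

lemma children_subset_idx_set:
  assumes "J \<in> idx_set M"
  shows "children J \<subseteq> idx_set (2*M)"
proof
  fix i assume "i \<in> children J"
  then have bounds: "i$k div 2 = J$k" "- int M \<le> J$k" "J$k < int M" for k
    using assms by (auto simp: children_def idx_set_def)
  have "- int (2*M) \<le> i$k \<and> i$k < int (2*M)" for k
    using bounds[of k] by presburger
  then show "i \<in> idx_set (2*M)"
    by (simp add: idx_set_def)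
qed

lemma card_children: "card (children (J :: int^'d::finite)) = 2 ^ CARD('d)"
proof -
  define child :: "('d \<Rightarrow> int) \<Rightarrow> int^'d" where "child f = (\<chi> k. 2 * J$k + f k)" for f
  have "children J = child ` PiE UNIV (\<lambda>_. {0, 1})"
  proof (intro set_eqI iffI)
    fix i assume "i \<in> children J"
    then have "i = child (\<lambda>k. i$k mod 2)"
      by (simp add: children_def child_def vec_eq_iff) (metis div_mult_mod_eq mult.commute)
    moreover have "(\<lambda>k. i$k mod 2) \<in> PiE UNIV (\<lambda>_. {0, 1})"
      by auto
    ultimately show "i \<in> child ` PiE UNIV (\<lambda>_. {0, 1})"
      by (rule image_eqI)
  next
    fix i assume "i \<in> child ` PiE UNIV (\<lambda>_. {0, 1})"
    then obtain f where f: "f \<in> PiE UNIV (\<lambda>_. {0, 1})" "i = child f"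
      by (rule imageE)
    have "f k div 2 = 0" for k
      using PiE_mem[OF f(1), of k] by auto
    then show "i \<in> children J"
      by (simp add: children_def child_def f(2))
  qed
  moreover have "inj_on child (PiE UNIV (\<lambda>_. {0 :: int, 1}))"
    by (rule inj_onI) (simp add: child_def vec_eq_iff fun_eq_iff)
  ultimately show ?thesis
    by (simp add: card_image card_PiE numeral_2_eq_2)
qed

lemma finite_children: "finite (children J)"
  using card_children[of J] by (intro card_ge_0_finite) simp

lemma fine_bins_in_bin_eq_children:
  assumes "M > 0" "J \<in> idx_set M"
  shows "{i \<in> idx_set (2*M). bin (2*M) i \<subseteq> bin M J} = children J"
  using bin_double_subset_iff[OF assms(1)] children_subset_idx_set[OF assms(2)] by blast

lemma coarse_bins_containing_child:
  assumes "M > 0" "J \<in> idx_set M" "i \<in> children J"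
  shows "{J' \<in> idx_set M. bin (2*M) i \<subseteq> bin M J'} = {J}"
  using bin_double_subset_iff[OF assms(1)] assms(2,3) by (auto simp: children_def vec_eq_iff)

lemma bin_eq_UN_children:
  assumes "M > 0"
  shows "bin M J = (\<Union>i\<in>children J. bin (2*M) i)"
proof
  show "bin M J \<subseteq> (\<Union>i\<in>children J. bin (2*M) i)"
  proof
    fix x assume "x \<in> bin M J"
    define i :: "int^_" where "i = (\<chi> k. \<lfloor>x$k * real (2*M)\<rfloor>)"
    have "x \<in> bin (2*M) i"
      using assms by (simp add: mem_bin_iff_floor i_def)
    moreover have "i \<in> children J"
      using assms \<open>x \<in> bin M J\<close>
      by (simp add: children_def i_def mem_bin_iff_floor floor_mult_double_div_2)
    ultimately show "x \<in> (\<Union>i\<in>children J. bin (2*M) i)"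
      by blast
  qed
qed (use bin_double_subset_iff[OF assms] in blast)

lemma sum_avg_mat_interp_mat:
  assumes "M > 0" "I \<in> idx_set M" "J \<in> idx_set M"
  shows "(\<Sum>i\<in>idx_set (2*M). \<Sum>j\<in>idx_set (2*M). avg_mat M I i * A i j * interp_mat M j J)
       = (\<Sum>i\<in>children I. \<Sum>j\<in>children J. A i j)"
proof -
  let ?S = "idx_set (2*M)"
  have entry: "avg_mat M I i * A i j * interp_mat M j J
      = (if i \<in> children I then if j \<in> children J then A i j else 0 else 0)" for i j
    by (simp add: avg_mat_def interp_mat_def bin_double_subset_iff[OF assms(1)])
  have "(\<Sum>i\<in>?S. \<Sum>j\<in>?S. avg_mat M I i * A i j * interp_mat M j J)
      = (\<Sum>i\<in>?S. if i \<in> children I then (\<Sum>j\<in>?S. if j \<in> children J then A i j else 0) else 0)"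
    by (intro sum.cong refl) (simp add: entry)
  also have "\<dots> = (\<Sum>i\<in>children I. \<Sum>j\<in>children J. A i j)"
    using children_subset_idx_set[OF assms(2)] children_subset_idx_set[OF assms(3)]
    by (simp add: sum.inter_restrict[symmetric] finite_idx_set Int_absorb1)
  finally show ?thesis .
qed

lemma inner_on_interp_eq_inner_on_avg:
  "inner_on (idx_set (2*M)) v (interp M w) = inner_on (idx_set M) (avg M v) w"
proof -
  have "inner_on (idx_set (2*M)) v (interp M w)
     = (\<Sum>i\<in>idx_set (2*M). \<Sum>J\<in>idx_set M. if bin (2*M) i \<subseteq> bin M J then v i * w J else 0)"
    unfolding inner_on_def interp_def
    by (simp add: sum.inter_filter[OF finite_idx_set] sum_distrib_left if_distrib cong: if_cong)
  also have "\<dots> = (\<Sum>J\<in>idx_set M. \<Sum>i\<in>idx_set (2*M). if bin (2*M) i \<subseteq> bin M J then v i * w J else 0)"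
    by (rule sum.swap)
  also have "\<dots> = inner_on (idx_set M) (avg M v) w"
    unfolding inner_on_def avg_def
    by (simp add: sum.inter_filter[OF finite_idx_set] sum_distrib_right) (auto intro!: sum.cong)
  finally show ?thesis .
qed

lemma avg_interp:
  assumes "M > 0" "J \<in> idx_set M"
  shows "avg M (interp M w) J = 2 ^ CARD('d) * w (J :: int^'d::finite)"
proof -
  have "avg M (interp M w) J = (\<Sum>i\<in>children J. interp M w i)"
    unfolding avg_def fine_bins_in_bin_eq_children[OF assms] ..
  also have "\<dots> = (\<Sum>i\<in>children J. w J)"
    by (rule sum.cong) (simp_all add: interp_def coarse_bins_containing_child[OF assms])
  also have "\<dots> = 2 ^ CARD('d) * w J"
    by (simp add: card_children)
  finally show ?thesis .
qed

lemma set_integral_bin_eq_sum_children: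
  fixes f :: "real^'d::finite \<Rightarrow> 'b::{banach, second_countable_topology}"
  assumes "M > 0" "set_integrable lborel (bin M J) f"
  shows "(LINT x:bin M J|lborel. f x) = (\<Sum>i\<in>children J. LINT x:bin (2*M) i|lborel. f x)"
proof -
  have "set_integrable lborel (bin (2*M) i) f" if "i \<in> children J" for i
    using set_integrable_subset[OF assms(2) sets_bin] bin_double_subset_iff[OF assms(1)] that
    by blast
  then show ?thesis
    unfolding bin_eq_UN_children[OF assms(1), of J]
    by (intro set_integral_finite_Union finite_children sets_bin
          disjoint_family_on_mono[OF subset_UNIV disjoint_family_bin])
qed

lemma set_integral_sum:
  fixes f :: "'i \<Rightarrow> 'a \<Rightarrow> 'b::{banach, second_countable_topology}"
  assumes "\<And>i. i \<in> I \<Longrightarrow> set_integrable M A (f i)"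
  shows "(LINT x:A|M. (\<Sum>i\<in>I. f i x)) = (\<Sum>i\<in>I. LINT x:A|M. f i x)"
  using assms unfolding set_integrable_def set_lebesgue_integral_def
  by (simp add: scaleR_sum_right)

lemma set_integrable_transition_density:
  assumes "transition_density K" "A \<in> sets lborel"
  shows "set_integrable lborel A (K x)"
  unfolding set_integrable_def
  by (rule integrable_mult_indicator) (use assms in \<open>auto simp: transition_density_def\<close>)

lemma set_integral_transition_density_bounds:
  assumes "transition_density K" "A \<in> sets lborel"
  shows "0 \<le> (LINT y:A|lborel. K x y) \<and> (LINT y:A|lborel. K x y) \<le> 1"
proof -
  have K: "integrable lborel (K x)" "(LINT y|lborel. K x y) = 1" "\<And>y. 0 \<le> K x y"
    using assms(1) by (auto simp: transition_density_def)
  have "0 \<le> (LINT y:A|lborel. K x y)"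
    unfolding set_lebesgue_integral_def by (rule integral_nonneg_AE) (simp add: K(3))
  moreover have "(LINT y:A|lborel. K x y) \<le> (LINT y|lborel. K x y)"
    unfolding set_lebesgue_integral_def
    using set_integrable_transition_density[OF assms, of x] unfolding set_integrable_def
    by (rule integral_mono[OF _ K(1)]) (simp add: K(3) indicator_def)
  ultimately show ?thesis
    using K(2) by simp
qed

lemma set_integrable_set_integral_transition_density:
  assumes "transition_density K" "A \<in> sets lborel"
    and "B \<in> sets lborel" "emeasure lborel B < \<infinity>"
  shows "set_integrable lborel B (\<lambda>x. LINT y:A|lborel. K x y)"
proof -
  have [measurable]: "case_prod K \<in> borel_measurable (lborel \<Otimes>\<^sub>M lborel)" "A \<in> sets lborel"
    using assms(1,2) by (simp_all add: transition_density_def)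
  have "(\<lambda>x. LINT y:A|lborel. K x y) \<in> borel_measurable lborel"
    unfolding set_lebesgue_integral_def by measurable
  then show ?thesis
    unfolding set_integrable_def
    using assms(3,4) set_integral_transition_density_bounds[OF assms(1,2)]
    by (intro integrableI_bounded_set_indicator[where B=1]) auto
qed

lemma ulam_eq_sum_children:
  assumes "M > 0" "transition_density K"
  shows "ulam K M I J = (\<Sum>i\<in>children I. \<Sum>j\<in>children J. ulam K (2*M) i j)"
proof -
  note split_bin = set_integral_bin_eq_sum_children[OF assms(1)]
  note integrable_K = set_integrable_transition_density[OF assms(2) sets_bin]
  note integrable_row = set_integrable_set_integral_transition_density[OF assms(2) sets_bin
      sets_bin emeasure_bin_finite]
  have "ulam K M I J = (LINT x:bin M I|lborel. \<Sum>j\<in>children J. LINT y:bin (2*M) j|lborel. K x y)"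
    unfolding ulam_def by (simp only: split_bin[OF integrable_K])
  also have "\<dots> = (\<Sum>j\<in>children J. LINT x:bin M I|lborel. LINT y:bin (2*M) j|lborel. K x y)"
    by (rule set_integral_sum) (rule integrable_row)
  also have "\<dots> = (\<Sum>j\<in>children J. \<Sum>i\<in>children I. ulam K (2*M) i j)"
    unfolding ulam_def by (simp only: split_bin[OF integrable_row])
  also have "\<dots> = (\<Sum>i\<in>children I. \<Sum>j\<in>children J. ulam K (2*M) i j)"
    by (rule sum.swap)
  finally show ?thesis .
qed

theorem lemma2:
  fixes K :: "real^'d::finite \<Rightarrow> real^'d \<Rightarrow> real" and M :: nat
    and v v2 :: "int^'d \<Rightarrow> real"
  assumes "M \<ge> 1" and "transition_density K"
  shows "(inner_on (idx_set (2*M)) v (interp M v2) = inner_on (idx_set M) (avg M v) v2)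
       \<and> (\<forall>J\<in>idx_set M. avg M (interp M v2) J = 2 ^ CARD('d) * v2 J)
       \<and> (\<forall>I\<in>idx_set M. \<forall>J\<in>idx_set M.
            ulam K M I J = (\<Sum>i\<in>idx_set (2*M). \<Sum>j\<in>idx_set (2*M).
                               avg_mat M I i * ulam K (2*M) i j * interp_mat M j J))"
proof -
  have M: "M > 0"
    using assms(1) by simp
  have "ulam K M I J = (\<Sum>i\<in>idx_set (2*M). \<Sum>j\<in>idx_set (2*M).
                         avg_mat M I i * ulam K (2*M) i j * interp_mat M j J)"
    if "I \<in> idx_set M" "J \<in> idx_set M" for I J
    unfolding sum_avg_mat_interp_mat[OF M that] by (rule ulam_eq_sum_children[OF M assms(2)])
  then show ?thesis
    using inner_on_interp_eq_inner_on_avg avg_interp[OF M] by blast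
qed

end
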